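(* Let $\Xi$ be a nonzero finite measure on $\Delta$ and let $\gamma$ be as in the context. Then $\gamma(0)=\gamma(1)=0$, $\gamma(x)>0$ for all $x>1$, and $\gamma(x)\le x(x-1)(a/2+\Xi_0(\Delta))$ for all $x\ge 2$. Moreover $\gamma\in C^\infty((0,\infty))$ with $$\gamma'(x)=a\Big(x-\tfrac12\Big)+\int_\Delta\sum_{i\ge1}\big((1-u_i)^x\log(1-u_i)+u_i\big)\,\nu(\mathrm du),\qquad x>0,$$ and, for every integer $k\ge 2$, $$\gamma^{(k)}(x)=a\,\delta_{k2}+\int_\Delta\sum_{i\ge1}(1-u_i)^x\big(\log(1-u_i)\big)^k\,\nu(\mathrm du),\qquad x>0,$$ where $\delta_{k2}$ is the Kronecker delta. Finally, the map $x\mapsto\gamma(x)/x$ is strictly increasing on $[1,\infty)$; in particular $\gamma$ is strictly increasing on $[1,\infty)$.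
   Context: Let $\Delta:=\{u=(u_1,u_2,\ldots):u_1\ge u_2\ge\cdots\ge0,\ \sum_{i\ge1}u_i\le1\}$, and for $u\in\Delta$ write $|u|:=\sum_{i\ge1}u_i$, $(u,u):=\sum_{i\ge1}u_i^2$, and $0:=(0,0,\ldots)$. Let $\Xi$ be a finite measure on $\Delta$, $a:=\Xi(\{0\})$, $\Xi_0:=\Xi-a\delta_0$ (so $\Xi=a\delta_0+\Xi_0$), and $\nu(\mathrm du):=\Xi_0(\mathrm du)/(u,u)$ on $\Delta\setminus\{0\}$. Define $\gamma:[0,\infty)\to\mathbb R$ by $$\gamma(x):=a\frac{x(x-1)}{2}+\int_\Delta\sum_{i\ge1}\big((1-u_i)^x-1+xu_i\big)\,\nu(\mathrm du),\qquad x\ge0.$$ *)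

theory Defs
  imports "HOL-Analysis.Analysis"
begin

text \<open>The simplex Delta of non-increasing non-negative sequences with sum at most 1.
  Sequences are functions nat to real; indices start at 0 (u 0 plays the role of u_1).
  The measurable structure is the Borel sigma-algebra of the product topology,
  restricted to Delta.\<close>

definition Delta :: "(nat \<Rightarrow> real) set" where
  "Delta = {u. (\<forall>i. u (Suc i) \<le> u i) \<and> (\<forall>i. 0 \<le> u i) \<and> summable u \<and> suminf u \<le> 1}"

definition sqsum :: "(nat \<Rightarrow> real) \<Rightarrow> real" where
  "sqsum u = (\<Sum>i. (u i)^2)"

text \<open>Real power with the convention b^0 = 1 (also for b = 0), b^x = b powr x otherwise.\<close>
definition rpow :: "real \<Rightarrow> real \<Rightarrow> real" where
  "rpow b x = (if x = 0 then 1 else b powr x)"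

definition xi_a :: "(nat \<Rightarrow> real) measure \<Rightarrow> real" where
  "xi_a Xi = measure Xi {\<lambda>_. 0}"

text \<open>Integral against nu(du) = Xi_0(du)/(u,u) on Delta minus {0}.\<close>
definition nu_integral :: "(nat \<Rightarrow> real) measure \<Rightarrow> ((nat \<Rightarrow> real) \<Rightarrow> real) \<Rightarrow> real" where
  "nu_integral Xi f = set_lebesgue_integral Xi (Delta - {\<lambda>_. 0}) (\<lambda>u. f u / sqsum u)"

definition xi_gamma :: "(nat \<Rightarrow> real) measure \<Rightarrow> real \<Rightarrow> real" where
  "xi_gamma Xi x = xi_a Xi * (x * (x - 1) / 2)
     + nu_integral Xi (\<lambda>u. \<Sum>i. (rpow (1 - u i) x - 1 + x * u i))"

end

theory Submission
  imports Defs
begin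

text \<open>Write \<open>\<phi>\<^sub>k(t, x)\<close> for the \<open>k\<close>-th \<open>x\<close>-derivative of \<open>(1 - t)\<^sup>x - 1 + x t\<close>, so that
  \<open>\<gamma>\<^sup>(\<^sup>k\<^sup>)(x) = a p\<^sub>k(x) + \<integral> \<Sum>\<^sub>i \<phi>\<^sub>k(u\<^sub>i, x) \<nu>(du)\<close> with \<open>p\<^sub>k\<close> the derivatives of \<open>x(x-1)/2\<close>.
  For \<open>k \<ge> 1\<close> and \<open>x\<close> in a compact subinterval of \<open>(0,\<infinity>)\<close> one has \<open>|\<phi>\<^sub>k(t, x)| \<le> B t\<^sup>2\<close>,
  so the integrand \<open>\<Sum>\<^sub>i \<phi>\<^sub>k(u\<^sub>i, x) / (u,u)\<close> is bounded and, \<open>\<Xi>\<close> being finite,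
  dominated convergence lets us differentiate under both the sum and the integral.
  Monotonicity of \<open>\<gamma>(x)/x\<close> comes from that of \<open>((1-t)\<^sup>x - 1)/x\<close>, the difference quotient
  of the convex function \<open>x \<mapsto> (1-t)\<^sup>x\<close> at \<open>0\<close>; since \<open>\<gamma>(1) = 0\<close> this also gives positivity.
  The upper bound follows from \<open>e\<^sup>-\<^sup>w \<le> 1 - w + w\<^sup>2/2\<close>.\<close>

section \<open>Differentiation under the integral sign\<close>

lemma integrable_of_derivative_bound:
  fixes f f' :: "real \<Rightarrow> 'a \<Rightarrow> real" and g :: "'a \<Rightarrow> real"
  assumes p: "c < p" "p < d" "integrable M (f p)"
    and meas: "\<And>t. c < t \<Longrightarrow> t < d \<Longrightarrow> f t \<in> borel_measurable M"
    and der: "\<And>t u. c < t \<Longrightarrow> t < d \<Longrightarrow> u \<in> space M \<Longrightarrow>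
      ((\<lambda>s. f s u) has_real_derivative f' t u) (at t)"
    and bnd: "\<And>t u. c < t \<Longrightarrow> t < d \<Longrightarrow> u \<in> space M \<Longrightarrow> \<bar>f' t u\<bar> \<le> g u"
    and g: "integrable M g"
    and t: "c < t" "t < d"
  shows "integrable M (f t)"
proof (rule Bochner_Integration.integrable_bound[where f="\<lambda>u. \<bar>f p u\<bar> + \<bar>t - p\<bar> * g u"])
  show "integrable M (\<lambda>u. \<bar>f p u\<bar> + \<bar>t - p\<bar> * g u)"
    using p g by auto
  show "f t \<in> borel_measurable M"
    using meas t by auto
  have "norm (f t u) \<le> norm (\<bar>f p u\<bar> + \<bar>t - p\<bar> * g u)" if u: "u \<in> space M" for u
  proof -
    have "0 \<le> g u"
      using bnd[OF p(1,2) u] by linarith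
    moreover have "\<bar>f t u - f p u\<bar> \<le> g u * \<bar>t - p\<bar>"
      using field_differentiable_bound[of "{c<..<d}" "\<lambda>s. f s u" "\<lambda>s. f' s u" "g u" t p]
        der[OF _ _ u] bnd[OF _ _ u] p t by (auto intro: has_field_derivative_at_within)
    ultimately show ?thesis
      by (auto simp: mult.commute)
  qed
  then show "AE u in M. norm (f t u) \<le> norm (\<bar>f p u\<bar> + \<bar>t - p\<bar> * g u)"
    by auto
qed

lemma has_real_derivative_integral:
  fixes f f' :: "real \<Rightarrow> 'a \<Rightarrow> real" and g :: "'a \<Rightarrow> real"
  assumes p: "c < p" "p < d" "integrable M (f p)"
    and meas: "\<And>t. c < t \<Longrightarrow> t < d \<Longrightarrow> f t \<in> borel_measurable M"
    and meas': "\<And>t. c < t \<Longrightarrow> t < d \<Longrightarrow> f' t \<in> borel_measurable M"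
    and der: "\<And>t u. c < t \<Longrightarrow> t < d \<Longrightarrow> u \<in> space M \<Longrightarrow>
      ((\<lambda>s. f s u) has_real_derivative f' t u) (at t)"
    and bnd: "\<And>t u. c < t \<Longrightarrow> t < d \<Longrightarrow> u \<in> space M \<Longrightarrow> \<bar>f' t u\<bar> \<le> g u"
    and g: "integrable M g"
    and x: "c < x" "x < d"
  shows "((\<lambda>t. \<integral>u. f t u \<partial>M) has_real_derivative (\<integral>u. f' x u \<partial>M)) (at x)"
proof -
  have int_f: "integrable M (f t)" if "c < t" "t < d" for t
    by (rule integrable_of_derivative_bound[OF p meas der bnd g that])
  have quotient_bound: "\<bar>(f y u - f x u) / (y - x)\<bar> \<le> g u"
    if "c < y" "y < d" "y \<noteq> x" "u \<in> space M" for y u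
  proof -
    have "\<bar>f y u - f x u\<bar> \<le> g u * \<bar>y - x\<bar>"
      using field_differentiable_bound[of "{c<..<d}" "\<lambda>s. f s u" "\<lambda>s. f' s u" "g u" y x]
        der[OF _ _ that(4)] bnd[OF _ _ that(4)] x that by (auto intro: has_field_derivative_at_within)
    then show ?thesis
      using that by (simp add: abs_divide divide_le_eq)
  qed
  show ?thesis
    unfolding has_field_derivative_iff
  proof (subst tendsto_at_iff_sequentially, intro allI impI)
    fix X :: "nat \<Rightarrow> real"
    assume X: "\<forall>i. X i \<in> UNIV - {x}" "X \<longlonglongrightarrow> x"
    have ev: "eventually (\<lambda>n. c < X n \<and> X n < d) sequentially"
      using order_tendstoD[OF X(2), of c] order_tendstoD[OF X(2), of d] x
      by (auto elim: eventually_elim2)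
    define q where "q n u = (if c < X n \<and> X n < d then (f (X n) u - f x u) / (X n - x) else f' x u)"
      for n u
    have "(\<lambda>n. integral\<^sup>L M (q n)) \<longlonglongrightarrow> integral\<^sup>L M (f' x)"
    proof (rule integral_dominated_convergence[where w=g])
      show "f' x \<in> borel_measurable M"
        using meas' x by auto
      show "q n \<in> borel_measurable M" for n
        unfolding q_def using meas meas' x by (cases "c < X n \<and> X n < d") auto
      show "integrable M g" by fact
      show "AE u in M. norm (q n u) \<le> g u" for n
        using quotient_bound[of "X n"] bnd[OF x] X(1) unfolding q_def by auto
      show "AE u in M. (\<lambda>n. q n u) \<longlonglongrightarrow> f' x u"
      proof (rule AE_I2)
        fix u assume u: "u \<in> space M"
        have "((\<lambda>y. (f y u - f x u) / (y - x)) \<longlongrightarrow> f' x u) (at x)"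
          using der[OF x u] unfolding has_field_derivative_iff .
        then have "(\<lambda>n. (f (X n) u - f x u) / (X n - x)) \<longlonglongrightarrow> f' x u"
          using X unfolding tendsto_at_iff_sequentially o_def by blast
        then show "(\<lambda>n. q n u) \<longlonglongrightarrow> f' x u"
          by (rule Lim_transform_eventually) (use ev in \<open>auto simp: q_def elim: eventually_mono\<close>)
      qed
    qed
    moreover have "eventually (\<lambda>n. integral\<^sup>L M (q n) =
        ((\<lambda>t. ((\<integral>u. f t u \<partial>M) - (\<integral>u. f x u \<partial>M)) / (t - x)) \<circ> X) n) sequentially"
      using ev
    proof (rule eventually_mono)
      fix n assume n: "c < X n \<and> X n < d"
      have "integral\<^sup>L M (q n) = (\<integral>u. f (X n) u - f x u \<partial>M) / (X n - x)"
        unfolding q_def using n by (simp add: integral_divide_zero)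
      then show "integral\<^sup>L M (q n) =
          ((\<lambda>t. ((\<integral>u. f t u \<partial>M) - (\<integral>u. f x u \<partial>M)) / (t - x)) \<circ> X) n"
        using int_f[of "X n"] int_f[OF x] n by simp
    qed
    ultimately show "((\<lambda>t. ((\<integral>u. f t u \<partial>M) - (\<integral>u. f x u \<partial>M)) / (t - x)) \<circ> X)
        \<longlonglongrightarrow> integral\<^sup>L M (f' x)"
      by (rule Lim_transform_eventually)
  qed
qed

lemma integral_pos_of_pos_on:
  fixes D :: "'a \<Rightarrow> real"
  assumes D: "integrable M D" "\<And>u. u \<in> space M \<Longrightarrow> 0 \<le> D u" "\<And>u. u \<in> A \<Longrightarrow> 0 < D u"
    and A: "A \<in> sets M" "emeasure M A \<noteq> 0"
  shows "0 < integral\<^sup>L M D"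
proof (rule ccontr)
  assume "\<not> 0 < integral\<^sup>L M D"
  moreover have "0 \<le> integral\<^sup>L M D"
    using D(2) by (intro integral_nonneg_AE) auto
  ultimately have "AE u in M. D u = 0"
    using integral_nonneg_eq_0_iff_AE[OF D(1)] D(2) by auto
  then have "AE u in M. u \<notin> A"
    by (auto elim!: eventually_mono dest!: D(3))
  then have "emeasure M A = 0"
    using AE_iff_measurable[OF A(1), of "\<lambda>u. u \<notin> A"] sets.sets_into_space[OF A(1)] by auto
  with A(2) show False ..
qed

section \<open>The kernel \<open>\<phi>\<^sub>k\<close>\<close>

definition gamma_kernel :: "nat \<Rightarrow> real \<Rightarrow> real \<Rightarrow> real" where
  "gamma_kernel k t x = (if k = 0 then (1 - t) powr x - 1 + x * t
     else if k = 1 then (1 - t) powr x * ln (1 - t) + t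
     else (1 - t) powr x * ln (1 - t) ^ k)"

lemma gamma_kernel_at_1: "t \<le> 1 \<Longrightarrow> gamma_kernel 0 t 1 = 0"
  by (simp add: gamma_kernel_def)

lemma has_real_derivative_gamma_kernel:
  assumes "t \<le> 1"
  shows "((\<lambda>x. gamma_kernel k t x) has_real_derivative gamma_kernel (Suc k) t x) (at x)"
proof (cases "t = 1")
  case True
  then have "(\<lambda>x. gamma_kernel k t x) = (\<lambda>x. if k = 0 then x - 1 else if k = 1 then 1 else 0)"
    and "gamma_kernel (Suc k) t x = (if k = 0 then 1 else 0)"
    by (auto simp: gamma_kernel_def fun_eq_iff)
  then show ?thesis
    by (cases "k = 0"; cases "k = 1") (auto intro!: derivative_eq_intros)
next
  case False
  with assms have "0 < 1 - t" by simp
  then show ?thesis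
    unfolding gamma_kernel_def
    by (cases "k = 0"; cases "k = 1"; simp)
       (auto intro!: derivative_eq_intros simp: power2_eq_square mult_ac)
qed

lemma powr_mult_abs_ln_power_le:
  fixes s c x :: real and k :: nat
  assumes s: "0 < s" "s \<le> 1" and c: "0 < c" "c \<le> x" and k: "0 < k"
  shows "s powr x * \<bar>ln s\<bar> ^ k \<le> (k / c) ^ k"
proof -
  define y where "y = - ln s"
  have y: "0 \<le> y" "\<bar>ln s\<bar> = y" "s powr x = exp (- (x * y))"
    using s by (auto simp: y_def powr_def)
  have "(c * y / k) ^ k \<le> (1 + c * y / k) ^ k"
    using c y by (intro power_mono) auto
  also have "\<dots> \<le> exp (c * y)"
    using c y k by (intro exp_ge_one_plus_x_over_n_power_n) (auto intro: order_trans[of _ 0])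
  finally have yk: "y ^ k \<le> (k / c) ^ k * exp (c * y)"
    using c k by (simp add: power_divide power_mult_distrib field_simps)
  have "s powr x * \<bar>ln s\<bar> ^ k \<le> exp (- (c * y)) * y ^ k"
    unfolding y(2,3) using c y by (intro mult_right_mono) (auto simp: mult_right_mono)
  also have "\<dots> \<le> exp (- (c * y)) * ((k / c) ^ k * exp (c * y))"
    using yk by (intro mult_left_mono) auto
  also have "\<dots> = (k / c) ^ k"
    by (simp add: exp_minus field_simps)
  finally show ?thesis .
qed

lemma ln_one_minus_bounds:
  fixes t :: real
  assumes "0 \<le> t" "t \<le> 1/2"
  shows "- (2 * t) \<le> ln (1 - t)" "ln (1 - t) \<le> - t"
proof -
  have "- t - 2 * t\<^sup>2 \<le> ln (1 - t)"
    using assms by (intro ln_one_minus_pos_lower_bound) auto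
  moreover have "2 * t\<^sup>2 \<le> t"
    using assms mult_right_mono[of t "1/2" t] by (simp add: power2_eq_square)
  ultimately show "- (2 * t) \<le> ln (1 - t)"
    by linarith
  show "ln (1 - t) \<le> - t"
    using ln_le_minus_one[of "1 - t"] assms by auto
qed

lemma one_le_four_square: "1/2 < t \<Longrightarrow> 1 \<le> 4 * (t::real)\<^sup>2"
  using mult_mono[of "1/2" t "1/2" t] by (simp add: power2_eq_square)

lemma gamma_kernel_ge2_abs_le:
  assumes k: "2 \<le> k" and c: "0 < c" "c \<le> x" and t: "0 \<le> t" "t \<le> 1"
  shows "\<bar>gamma_kernel k t x\<bar> \<le> (4 + 4 * (k / c) ^ k) * t\<^sup>2"
proof -
  have eq: "\<bar>gamma_kernel k t x\<bar> = (1 - t) powr x * \<bar>ln (1 - t)\<bar> ^ k"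
    using k by (simp add: gamma_kernel_def abs_mult power_abs)
  have B: "0 \<le> (k / c) ^ k"
    using c by simp
  consider "t \<le> 1/2" | "1/2 < t" "t < 1" | "t = 1"
    using t by linarith
  then show ?thesis
  proof cases
    case 1
    have "(1 - t) powr x * \<bar>ln (1 - t)\<bar> ^ k \<le> 1 * (2 * t) ^ k"
      using ln_one_minus_bounds[OF t(1) 1] t 1 c
      by (intro mult_mono power_mono powr_le1) auto
    also have "\<dots> \<le> (2 * t) ^ 2"
      using k t 1 power_decreasing[of 2 k "2 * t"] by auto
    also have "\<dots> \<le> (4 + 4 * (k / c) ^ k) * t\<^sup>2"
      using B by (simp add: power_mult_distrib mult_right_mono)
    finally show ?thesis
      unfolding eq .
  next
    case 2
    have "(1 - t) powr x * \<bar>ln (1 - t)\<bar> ^ k \<le> (k / c) ^ k"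
      using 2 c k by (intro powr_mult_abs_ln_power_le) auto
    also have "\<dots> \<le> (k / c) ^ k * (4 * t\<^sup>2)"
      using B one_le_four_square[OF 2(1)] mult_left_mono[of 1 "4 * t\<^sup>2" "(k / c) ^ k"] by simp
    also have "\<dots> \<le> (4 + 4 * (k / c) ^ k) * t\<^sup>2"
      by (simp add: algebra_simps)
    finally show ?thesis
      unfolding eq .
  next
    case 3
    then show ?thesis
      using eq B k by simp
  qed
qed

lemma gamma_kernel_1_abs_le:
  assumes c: "0 < c" and x: "x \<in> {c..d}" and t: "0 \<le> t" "t \<le> 1"
  shows "\<bar>gamma_kernel 1 t x\<bar> \<le> (2 * \<bar>d\<bar> + 6 + 4 / c) * t\<^sup>2"
proof -
  have eq: "gamma_kernel 1 t x = (1 - t) powr x * ln (1 - t) + t"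
    by (simp add: gamma_kernel_def)
  have x0: "0 \<le> x" "x \<le> \<bar>d\<bar>"
    using x c by auto
  consider "t \<le> 1/2" | "1/2 < t" "t < 1" | "t = 1"
    using t by linarith
  then show ?thesis
  proof cases
    case 1
    define L where "L = ln (1 - t)"
    define P where "P = (1 - t) powr x"
    have L: "- (2 * t) \<le> L" "L \<le> - t" "- (2 * t\<^sup>2) \<le> L + t"
      using ln_one_minus_bounds[OF t(1) 1] ln_one_minus_pos_lower_bound[of t] t 1
      by (auto simp: L_def)
    have P: "P \<le> 1" "0 \<le> P"
      using t 1 x0 by (auto intro: powr_le1 simp: P_def)
    have P1: "1 + x * L \<le> P"
      using t 1 by (simp add: P_def L_def powr_def)
    \<comment> \<open>\<open>1 + x L \<le> P \<le> 1\<close> traps \<open>P L + t\<close> between \<open>L + t\<close> and \<open>t (1 - P)\<close>.\<close>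
    have "P * L + t \<le> t * (1 - P)"
      using mult_left_mono[of L "-t" P] L P by (simp add: algebra_simps)
    also have "\<dots> \<le> t * (x * (2 * t))"
      using P1 L t x0 mult_left_mono[of "-L" "2 * t" x] by (intro mult_left_mono) auto
    also have "\<dots> \<le> t * (\<bar>d\<bar> * (2 * t))"
      using t x0 by (intro mult_left_mono mult_right_mono) auto
    finally have "P * L + t \<le> 2 * \<bar>d\<bar> * t\<^sup>2"
      by (simp add: power2_eq_square mult_ac)
    moreover have "- (2 * t\<^sup>2) \<le> P * L + t"
      using L P t mult_right_mono_neg[of P 1 L] by simp
    moreover have "0 \<le> 2 * \<bar>d\<bar> * t\<^sup>2" "0 \<le> t\<^sup>2"
      by simp_all
    ultimately have "\<bar>P * L + t\<bar> \<le> 2 * \<bar>d\<bar> * t\<^sup>2 + 2 * t\<^sup>2"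
      by (intro abs_leI) linarith+
    also have "\<dots> \<le> (2 * \<bar>d\<bar> + 6 + 4 / c) * t\<^sup>2"
      using c by (simp add: algebra_simps)
    finally show ?thesis
      unfolding eq P_def L_def .
  next
    case 2
    have "\<bar>gamma_kernel 1 t x\<bar> \<le> (1 - t) powr x * \<bar>ln (1 - t)\<bar> ^ 1 + 1"
      unfolding eq using abs_triangle_ineq[of "(1 - t) powr x * ln (1 - t)" t] t by (simp add: abs_mult)
    also have "(1 - t) powr x * \<bar>ln (1 - t)\<bar> ^ 1 \<le> (real 1 / c) ^ 1"
      using 2 c x by (intro powr_mult_abs_ln_power_le) auto
    finally have "\<bar>gamma_kernel 1 t x\<bar> \<le> (1 / c + 1) * 1"
      by simp
    also have "\<dots> \<le> (1 / c + 1) * (4 * t\<^sup>2)"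
      using c one_le_four_square[OF 2(1)] by (intro mult_left_mono) auto
    also have "\<dots> \<le> (2 * \<bar>d\<bar> + 6 + 4 / c) * t\<^sup>2"
      by (simp add: algebra_simps)
    finally show ?thesis .
  next
    case 3
    then show ?thesis
      using c by (simp add: gamma_kernel_def)
  qed
qed

lemma gamma_kernel_abs_le:
  assumes "1 \<le> k" "0 < c"
  obtains B where "\<And>t x. t \<in> {0..1} \<Longrightarrow> x \<in> {c..d} \<Longrightarrow> \<bar>gamma_kernel k t x\<bar> \<le> B * t\<^sup>2"
proof (cases "k = 1")
  case True
  then show ?thesis
    using gamma_kernel_1_abs_le[OF assms(2)] by (intro that[of "2 * \<bar>d\<bar> + 6 + 4 / c"]) auto
next
  case False
  then show ?thesis
    using gamma_kernel_ge2_abs_le[of k c] assms by (intro that[of "4 + 4 * (k / c) ^ k"]) auto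
qed

lemma powr_minus_one_div_strict_mono:
  fixes s x y :: real
  assumes s: "0 < s" "s < 1" and xy: "0 < x" "x < y"
  shows "(s powr x - 1) / x < (s powr y - 1) / y"
proof (rule DERIV_pos_imp_increasing[OF xy(2)])
  fix z assume z: "x \<le> z" "z \<le> y"
  then have z0: "0 < z"
    using xy by linarith
  define w where "w = z * ln s"
  have w: "w < 0" "s powr z = exp w"
    using s z0 by (simp_all add: w_def mult_pos_neg powr_def mult.commute)
  have "exp w * (1 - w) < exp w * exp (- w)"
    using exp_minus_greater[of w] w by simp
  then have "0 < (s powr z * ln s) * z - (s powr z - 1)"
    unfolding w(2) using w z0 by (simp add: w_def exp_minus algebra_simps)
  then have "0 < ((s powr z * ln s) * z - (s powr z - 1)) / (z * z)"
    using z0 by simp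
  moreover have "((\<lambda>z. (s powr z - 1) / z) has_real_derivative
      ((s powr z * ln s) * z - (s powr z - 1)) / (z * z)) (at z)"
    using s z0 by (auto intro!: derivative_eq_intros simp: power2_eq_square mult_ac)
  ultimately show "\<exists>l. ((\<lambda>z. (s powr z - 1) / z) has_real_derivative l) (at z) \<and> 0 < l"
    by blast
qed

lemma gamma_kernel_0_div_mono:
  fixes t x y :: real
  assumes t: "0 \<le> t" "t \<le> 1" and xy: "0 < x" "x < y"
  shows "gamma_kernel 0 t x / x \<le> gamma_kernel 0 t y / y"
    and "0 < t \<Longrightarrow> gamma_kernel 0 t x / x < gamma_kernel 0 t y / y"
proof -
  have eq: "gamma_kernel 0 t z / z = ((1 - t) powr z - 1) / z + t" if "0 < z" for z
    using that by (simp add: gamma_kernel_def field_simps)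
  show strict: "gamma_kernel 0 t x / x < gamma_kernel 0 t y / y" if "0 < t"
  proof (cases "t = 1")
    case True
    then show ?thesis
      unfolding eq[OF xy(1)] eq[OF order.strict_trans[OF xy]] using xy by (simp add: frac_less2)
  next
    case False
    then show ?thesis
      unfolding eq[OF xy(1)] eq[OF order.strict_trans[OF xy]]
      using powr_minus_one_div_strict_mono[of "1 - t" x y] t that xy by auto
  qed
  show "gamma_kernel 0 t x / x \<le> gamma_kernel 0 t y / y"
    using strict t by (cases "t = 0") (auto simp: gamma_kernel_def)
qed

lemma exp_minus_le_quadratic:
  fixes w :: real
  assumes "0 \<le> w"
  shows "exp (- w) \<le> 1 - w + w\<^sup>2 / 2"
proof -
  let ?h = "\<lambda>v::real. 1 - v + v\<^sup>2 / 2 - exp (- v)"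
  have "?h 0 \<le> ?h w"
  proof (rule DERIV_nonneg_imp_increasing_open[OF assms])
    fix v :: real
    have "(?h has_real_derivative (v - 1 + exp (- v))) (at v)"
      by (auto intro!: derivative_eq_intros)
    moreover have "0 \<le> v - 1 + exp (- v)"
      using exp_minus_ge[of v] by simp
    ultimately show "\<exists>y. (?h has_real_derivative y) (at v) \<and> 0 \<le> y"
      by blast
  qed (auto intro!: continuous_intros)
  then show ?thesis
    by simp
qed

lemma gamma_kernel_0_le:
  fixes t x :: real
  assumes t: "0 \<le> t" "t \<le> 1" and x: "2 \<le> x"
  shows "gamma_kernel 0 t x \<le> x * (x - 1) * t\<^sup>2"
proof -
  have "(1 - t) powr x \<le> exp (- (x * t))"
  proof (cases "t = 1")
    case False
    then have "0 < 1 - t"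
      using t by simp
    then have "x * ln (1 - t) \<le> x * (- t)"
      using ln_le_minus_one[of "1 - t"] x by (intro mult_left_mono) auto
    then show ?thesis
      using \<open>0 < 1 - t\<close> by (simp add: powr_def)
  qed simp
  also have "\<dots> \<le> 1 - x * t + (x * t)\<^sup>2 / 2"
    using t x by (intro exp_minus_le_quadratic) simp
  finally have "gamma_kernel 0 t x \<le> (x * x / 2) * t\<^sup>2"
    by (simp add: gamma_kernel_def power2_eq_square algebra_simps)
  also have "\<dots> \<le> x * (x - 1) * t\<^sup>2"
    using x mult_left_mono[of "x/2" "x - 1" x] by (intro mult_right_mono) (simp_all add: algebra_simps)
  finally show ?thesis .
qed

lemma borel_measurable_gamma_kernel: "(\<lambda>t. gamma_kernel k t x) \<in> borel_measurable borel"
  unfolding gamma_kernel_def by measurable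

section \<open>Sums over the simplex\<close>

lemma Delta_memD:
  assumes "u \<in> Delta"
  shows "0 \<le> u i" "u i \<le> 1" "summable (\<lambda>i. (u i)\<^sup>2)"
proof -
  have u: "\<forall>i. 0 \<le> u i" "summable u" "suminf u \<le> 1"
    using assms by (auto simp: Delta_def)
  have le1: "u n \<le> 1" for n
    using u sum_le_suminf[of u "{n}"] by auto
  show "0 \<le> u i" "u i \<le> 1"
    using u le1 by auto
  show "summable (\<lambda>i. (u i)\<^sup>2)"
    using u(1) le1 by (intro summable_comparison_test'[OF u(2)]) (simp add: power2_eq_square mult_left_le)
qed

lemma zero_in_Delta: "(\<lambda>_. 0) \<in> Delta"
  by (simp add: Delta_def)

lemma sqsum_pos:
  assumes "u \<in> Delta" "u \<noteq> (\<lambda>_. 0)"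
  shows "0 < sqsum u"
proof -
  obtain i where "u i \<noteq> 0"
    using assms(2) by auto
  then show ?thesis
    unfolding sqsum_def by (intro suminf_pos2[OF Delta_memD(3)[OF assms(1)], of i]) auto
qed

lemma gamma_kernel_series_bound:
  assumes u: "u \<in> Delta" and x: "x \<in> {c..d}"
    and B: "\<And>t x. t \<in> {0..1} \<Longrightarrow> x \<in> {c..d} \<Longrightarrow> \<bar>gamma_kernel k t x\<bar> \<le> B * t\<^sup>2"
  shows "summable (\<lambda>i. gamma_kernel k (u i) x)"
    and "\<bar>\<Sum>i. gamma_kernel k (u i) x\<bar> \<le> B * sqsum u"
proof -
  have b: "\<bar>gamma_kernel k (u i) x\<bar> \<le> B * (u i)\<^sup>2" for i
    using B[of "u i" x] Delta_memD(1,2)[OF u, of i] x by simp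
  have sq: "summable (\<lambda>i. B * (u i)\<^sup>2)"
    using Delta_memD(3)[OF u] by (rule summable_mult)
  show s: "summable (\<lambda>i. gamma_kernel k (u i) x)"
    using b by (intro summable_comparison_test'[OF sq]) simp
  have sa: "summable (\<lambda>i. \<bar>gamma_kernel k (u i) x\<bar>)"
    using b by (intro summable_comparison_test'[OF sq]) simp
  have "\<bar>\<Sum>i. gamma_kernel k (u i) x\<bar> \<le> (\<Sum>i. \<bar>gamma_kernel k (u i) x\<bar>)"
    by (rule summable_rabs[OF sa])
  also have "\<dots> \<le> (\<Sum>i. B * (u i)\<^sup>2)"
    by (rule suminf_le[OF b sa sq])
  also have "\<dots> = B * sqsum u"
    unfolding sqsum_def by (rule suminf_mult[OF Delta_memD(3)[OF u]])
  finally show "\<bar>\<Sum>i. gamma_kernel k (u i) x\<bar> \<le> B * sqsum u" .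
qed

text \<open>Termwise differentiation is differentiation under the integral for the counting
  measure; the series for \<open>k = 0\<close> is summable at \<open>x = 1\<close>, where all its terms vanish.\<close>

lemma has_real_derivative_gamma_kernel_series:
  assumes u: "u \<in> Delta" and x: "0 < x"
  shows "summable (\<lambda>i. gamma_kernel k (u i) x)"
    and "((\<lambda>x. \<Sum>i. gamma_kernel k (u i) x) has_real_derivative (\<Sum>i. gamma_kernel (Suc k) (u i) x)) (at x)"
proof -
  define c where "c = min x 1 / 2"
  define d where "d = max x 1 + 1"
  have cd: "0 < c" "c < 1" "1 < d" "c < x" "x < d"
    using x by (auto simp: c_def d_def)
  obtain B where B: "\<And>t x. t \<in> {0..1} \<Longrightarrow> x \<in> {c..d} \<Longrightarrow> \<bar>gamma_kernel (Suc k) t x\<bar> \<le> B * t\<^sup>2"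
    using gamma_kernel_abs_le[of "Suc k" c d] cd by auto
  let ?M = "count_space (UNIV :: nat set)"
  define f where "f t i = gamma_kernel k (u i) t" for t i
  define f' where "f' t i = gamma_kernel (Suc k) (u i) t" for t i
  have g: "integrable ?M (\<lambda>i. B * (u i)\<^sup>2)"
    unfolding integrable_count_space_nat_iff
    using summable_mult[OF Delta_memD(3)[OF u], of "\<bar>B\<bar>"] by (simp add: abs_mult)
  have int_f1: "integrable ?M (f 1)"
  proof (cases "k = 0")
    case True
    then have "f 1 = (\<lambda>i. 0)"
      using Delta_memD(2)[OF u] by (simp add: f_def gamma_kernel_at_1 fun_eq_iff)
    then show ?thesis
      by simp
  next
    case False
    then obtain B' where "\<And>t x. t \<in> {0..1} \<Longrightarrow> x \<in> {c..d} \<Longrightarrow> \<bar>gamma_kernel k t x\<bar> \<le> B' * t\<^sup>2"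
      using gamma_kernel_abs_le[of k c d] cd by auto
    then have "summable (\<lambda>i. \<bar>gamma_kernel k (u i) 1\<bar>)"
      using Delta_memD(1,2)[OF u] cd
      by (intro summable_comparison_test'[OF summable_mult[OF Delta_memD(3)[OF u], of B']]) auto
    then show ?thesis
      unfolding integrable_count_space_nat_iff f_def by simp
  qed
  have der: "((\<lambda>s. f s i) has_real_derivative f' t i) (at t)" for t i
    unfolding f_def f'_def by (rule has_real_derivative_gamma_kernel[OF Delta_memD(2)[OF u]])
  have bnd: "\<bar>f' t i\<bar> \<le> B * (u i)\<^sup>2" if "c < t" "t < d" for t i
    using B Delta_memD(1,2)[OF u, of i] that unfolding f'_def by auto
  have int_f: "integrable ?M (f t)" if "c < t" "t < d" for t
    by (rule integrable_of_derivative_bound[where f'=f' and g="\<lambda>i. B * (u i)\<^sup>2" and c=c and d=d and p=1])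
      (use int_f1 cd der bnd g that in auto)
  have D: "((\<lambda>t. \<integral>i. f t i \<partial>?M) has_real_derivative (\<integral>i. f' x i \<partial>?M)) (at x)"
    by (rule has_real_derivative_integral[where g="\<lambda>i. B * (u i)\<^sup>2" and c=c and d=d and p=1])
      (use int_f1 cd der bnd g in auto)
  have int_f': "integrable ?M (f' x)"
    using bnd[OF cd(4,5)] by (intro Bochner_Integration.integrable_bound[OF g])
      (auto intro: order_trans[OF _ abs_ge_self])
  show "summable (\<lambda>i. gamma_kernel k (u i) x)"
    using int_f[OF cd(4,5)] unfolding integrable_count_space_nat_iff f_def by (rule summable_norm_cancel)
  have "(\<integral>i. f t i \<partial>?M) = (\<Sum>i. gamma_kernel k (u i) t)" if "t \<in> {c<..<d}" for t
    using integral_count_space_nat[OF int_f[of t]] that unfolding f_def[abs_def] by simp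
  moreover have "(\<integral>i. f' x i \<partial>?M) = (\<Sum>i. gamma_kernel (Suc k) (u i) x)"
    using integral_count_space_nat[OF int_f'] unfolding f'_def[abs_def] by simp
  ultimately show "((\<lambda>x. \<Sum>i. gamma_kernel k (u i) x) has_real_derivative
      (\<Sum>i. gamma_kernel (Suc k) (u i) x)) (at x)"
    using has_field_derivative_transform_within_open[OF D, of "{c<..<d}"] cd by auto
qed

lemma borel_measurable_coordinate [measurable]: "(\<lambda>u::nat \<Rightarrow> real. u i) \<in> borel_measurable borel"
  by (rule borel_measurable_continuous_onI, rule continuous_on_product_then_coordinatewise,
      rule continuous_on_id)

lemma borel_measurable_gamma_kernel_series:
  "(\<lambda>u::nat \<Rightarrow> real. (\<Sum>i. gamma_kernel k (u i) x) / sqsum u) \<in> borel_measurable borel"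
proof -
  have "(\<lambda>u::nat \<Rightarrow> real. gamma_kernel k (u i) x) \<in> borel_measurable borel" for i
    using measurable_compose[OF borel_measurable_coordinate borel_measurable_gamma_kernel] by simp
  then have "(\<lambda>u::nat \<Rightarrow> real. \<Sum>i. gamma_kernel k (u i) x) \<in> borel_measurable borel"
    by (rule borel_measurable_suminf)
  moreover have "sqsum \<in> borel_measurable borel"
    unfolding sqsum_def[abs_def] by (intro borel_measurable_suminf borel_measurable_power) simp
  ultimately show ?thesis
    by (rule borel_measurable_divide)
qed

text \<open>The integrand of \<open>\<gamma>\<^sup>(\<^sup>k\<^sup>)(x)\<close> with respect to \<open>\<Xi>\<close> rather than \<open>\<nu>\<close>: the density \<open>1/(u,u)\<close> is
  built in and the indicator removes the atom of \<open>\<Xi>\<close> at \<open>0\<close>.\<close>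

definition gamma_integrand :: "nat \<Rightarrow> real \<Rightarrow> (nat \<Rightarrow> real) \<Rightarrow> real" where
  "gamma_integrand k x u = indicator (Delta - {\<lambda>_. 0}) u * ((\<Sum>i. gamma_kernel k (u i) x) / sqsum u)"

lemma gamma_integrand_abs_le:
  assumes "1 \<le> k" "0 < c"
  obtains B where "\<And>x u. x \<in> {c..d} \<Longrightarrow> u \<in> Delta \<Longrightarrow> \<bar>gamma_integrand k x u\<bar> \<le> B"
proof -
  obtain B where B: "\<And>t x. t \<in> {0..1} \<Longrightarrow> x \<in> {c..d} \<Longrightarrow> \<bar>gamma_kernel k t x\<bar> \<le> B * t\<^sup>2"
    using gamma_kernel_abs_le[OF assms] by blast
  have "\<bar>gamma_integrand k x u\<bar> \<le> \<bar>B\<bar>" if x: "x \<in> {c..d}" and u: "u \<in> Delta" for x u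
  proof (cases "u = (\<lambda>_. 0)")
    case False
    have sq: "0 < sqsum u"
      by (rule sqsum_pos[OF u False])
    have "\<bar>gamma_integrand k x u\<bar> = \<bar>\<Sum>i. gamma_kernel k (u i) x\<bar> / sqsum u"
      using u False sq by (simp add: gamma_integrand_def abs_divide)
    also have "\<dots> \<le> B * sqsum u / sqsum u"
      using gamma_kernel_series_bound(2)[OF u x B] sq by (intro divide_right_mono) auto
    also have "\<dots> \<le> \<bar>B\<bar>"
      using sq by simp
    finally show ?thesis .
  qed (simp add: gamma_integrand_def)
  then show ?thesis
    by (rule that)
qed

lemma has_real_derivative_gamma_integrand:
  assumes "u \<in> Delta" "0 < x"
  shows "((\<lambda>s. gamma_integrand k s u) has_real_derivative gamma_integrand (Suc k) x u) (at x)"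
  unfolding gamma_integrand_def
  by (intro DERIV_cmult DERIV_cdivide has_real_derivative_gamma_kernel_series(2) assms)

lemma gamma_integrand_0_at_1: "gamma_integrand 0 1 = (\<lambda>u. 0)"
proof
  fix u
  show "gamma_integrand 0 1 u = 0"
  proof (cases "u \<in> Delta")
    case True
    then show ?thesis
      using Delta_memD(2)[OF True] by (simp add: gamma_integrand_def gamma_kernel_at_1)
  qed (simp add: gamma_integrand_def)
qed

lemma gamma_integrand_0_div_mono:
  assumes u: "u \<in> Delta" and xy: "0 < x" "x < y"
  shows "gamma_integrand 0 x u / x \<le> gamma_integrand 0 y u / y"
    and "u \<noteq> (\<lambda>_. 0) \<Longrightarrow> gamma_integrand 0 x u / x < gamma_integrand 0 y u / y"
proof -
  have y: "0 < y"
    using xy by linarith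
  have sx: "summable (\<lambda>i. gamma_kernel 0 (u i) x)" and sy: "summable (\<lambda>i. gamma_kernel 0 (u i) y)"
    using has_real_derivative_gamma_kernel_series(1)[OF u] xy y by auto
  let ?T = "\<lambda>i. gamma_kernel 0 (u i) y / y - gamma_kernel 0 (u i) x / x"
  have T: "summable ?T"
    using sx sy by (intro summable_diff summable_divide)
  have T_nonneg: "0 \<le> ?T i" for i
    using gamma_kernel_0_div_mono(1)[OF Delta_memD(1,2)[OF u] xy] by simp
  have eq: "gamma_integrand 0 y u / y - gamma_integrand 0 x u / x = (\<Sum>i. ?T i) / sqsum u"
    if "u \<noteq> (\<lambda>_. 0)"
  proof -
    have "(\<Sum>i. ?T i) = (\<Sum>i. gamma_kernel 0 (u i) y) / y - (\<Sum>i. gamma_kernel 0 (u i) x) / x"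
      using suminf_diff[OF summable_divide[OF sy, of y] summable_divide[OF sx, of x]]
        suminf_divide[OF sy, of y] suminf_divide[OF sx, of x] by simp
    then show ?thesis
      using u that by (simp add: gamma_integrand_def diff_divide_distrib mult.commute)
  qed
  show strict: "gamma_integrand 0 x u / x < gamma_integrand 0 y u / y" if u0: "u \<noteq> (\<lambda>_. 0)"
  proof -
    obtain i where "u i \<noteq> 0"
      using u0 by auto
    then have "0 < ?T i"
      using gamma_kernel_0_div_mono(2)[OF Delta_memD(1,2)[OF u] xy] Delta_memD(1)[OF u, of i] by simp
    then have "0 < (\<Sum>i. ?T i)"
      by (intro suminf_pos2[OF T T_nonneg])
    then have "0 < (\<Sum>i. ?T i) / sqsum u"
      using sqsum_pos[OF u u0] by simp
    then show ?thesis
      using eq[OF u0] by linarith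
  qed
  show "gamma_integrand 0 x u / x \<le> gamma_integrand 0 y u / y"
    using strict by (cases "u = (\<lambda>_. 0)") (auto simp: gamma_integrand_def)
qed

lemma gamma_integrand_0_le:
  assumes u: "u \<in> Delta" and x: "2 \<le> x"
  shows "gamma_integrand 0 x u \<le> x * (x - 1) * indicator (Delta - {\<lambda>_. 0}) u"
proof (cases "u = (\<lambda>_. 0)")
  case False
  have sq: "0 < sqsum u"
    by (rule sqsum_pos[OF u False])
  have "(\<Sum>i. gamma_kernel 0 (u i) x) \<le> (\<Sum>i. x * (x - 1) * (u i)\<^sup>2)"
    using gamma_kernel_0_le[OF Delta_memD(1,2)[OF u] x] has_real_derivative_gamma_kernel_series(1)[OF u]
      summable_mult[OF Delta_memD(3)[OF u]] x
    by (intro suminf_le) auto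
  also have "\<dots> = x * (x - 1) * sqsum u"
    unfolding sqsum_def by (rule suminf_mult[OF Delta_memD(3)[OF u]])
  finally show ?thesis
    using u False sq by (simp add: gamma_integrand_def divide_le_eq)
qed (simp add: gamma_integrand_def)

definition gamma_poly :: "nat \<Rightarrow> real \<Rightarrow> real" where
  "gamma_poly k x = (if k = 0 then x * (x - 1) / 2 else if k = 1 then x - 1/2 else if k = 2 then 1 else 0)"

lemma has_real_derivative_gamma_poly: "(gamma_poly k has_real_derivative gamma_poly (Suc k) x) (at x)"
proof -
  consider "k = 0" | "k = 1" | "2 \<le> k"
    by linarith
  then show ?thesis
  proof cases
    case 1
    then show ?thesis
      unfolding gamma_poly_def by (auto intro!: derivative_eq_intros simp: field_simps)
  next
    case 2
    then show ?thesis
      unfolding gamma_poly_def by (auto intro!: derivative_eq_intros)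
  next
    case 3
    then have "gamma_poly k = (\<lambda>x. if k = 2 then 1 else 0)"
      by (auto simp: gamma_poly_def fun_eq_iff)
    then show ?thesis
      using 3 by (simp add: gamma_poly_def)
  qed
qed

section \<open>The function \<open>\<gamma>\<close>\<close>

lemma nu_integral_gamma_kernel:
  "nu_integral Xi (\<lambda>u. \<Sum>i. gamma_kernel k (u i) x) = integral\<^sup>L Xi (gamma_integrand k x)"
  by (simp add: nu_integral_def set_lebesgue_integral_def gamma_integrand_def[abs_def])

context
  fixes Xi :: "(nat \<Rightarrow> real) measure"
  assumes finite: "finite_measure Xi"
    and sets_Xi: "sets Xi = sets (restrict_space borel Delta)"
begin

lemma space_Xi: "space Xi = Delta"
  using sets_eq_imp_space_eq[OF sets_Xi] by (simp add: space_restrict_space)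

lemma Delta_minus_zero_in_sets: "Delta - {\<lambda>_. 0} \<in> sets Xi"
  and zero_in_sets: "{\<lambda>_. 0} \<in> sets Xi"
proof -
  have "Delta - {\<lambda>_. 0} = Delta \<inter> - {\<lambda>_. 0}" "{\<lambda>_. 0} = Delta \<inter> {\<lambda>_. 0::real}"
    using zero_in_Delta by blast+
  moreover have "- {\<lambda>_. 0::real} \<in> sets (borel :: (nat \<Rightarrow> real) measure)"
    by (intro borel_open open_Compl closed_singleton)
  moreover have "{\<lambda>_. 0::real} \<in> sets (borel :: (nat \<Rightarrow> real) measure)"
    by (intro borel_closed closed_singleton)
  ultimately show "Delta - {\<lambda>_. 0} \<in> sets Xi" "{\<lambda>_. 0} \<in> sets Xi"
    unfolding sets_Xi sets_restrict_space by (metis image_eqI)+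
qed

lemma borel_measurable_gamma_integrand: "gamma_integrand k x \<in> borel_measurable Xi"
proof -
  have "(\<lambda>u. (\<Sum>i. gamma_kernel k (u i) x) / sqsum u) \<in> borel_measurable Xi"
    using measurable_restrict_space1[OF borel_measurable_gamma_kernel_series]
      measurable_cong_sets[OF sets_Xi refl] by blast
  then show ?thesis
    unfolding gamma_integrand_def[abs_def]
    by (intro borel_measurable_times borel_measurable_indicator Delta_minus_zero_in_sets)
qed

lemma integrable_gamma_integrand_of_bound:
  assumes "\<And>u. u \<in> Delta \<Longrightarrow> \<bar>gamma_integrand k x u\<bar> \<le> B"
  shows "integrable Xi (gamma_integrand k x)"
proof (rule Bochner_Integration.integrable_bound[OF finite_measure.integrable_const[OF finite, of B]])
  show "gamma_integrand k x \<in> borel_measurable Xi"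
    by (rule borel_measurable_gamma_integrand)
  show "AE u in Xi. norm (gamma_integrand k x u) \<le> norm B"
    using assms space_Xi by (auto intro: order_trans[OF _ abs_ge_self])
qed

lemma has_real_derivative_integral_gamma_integrand:
  assumes x: "0 < x"
  shows "integrable Xi (gamma_integrand k x)"
    and "((\<lambda>t. integral\<^sup>L Xi (gamma_integrand k t)) has_real_derivative
      integral\<^sup>L Xi (gamma_integrand (Suc k) x)) (at x)"
proof -
  define c where "c = min x 1 / 2"
  define d where "d = max x 1 + 1"
  have cd: "0 < c" "c < 1" "1 < d" "c < x" "x < d"
    using x by (auto simp: c_def d_def)
  obtain B where B: "\<And>t u. t \<in> {c..d} \<Longrightarrow> u \<in> Delta \<Longrightarrow> \<bar>gamma_integrand (Suc k) t u\<bar> \<le> B"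
    using gamma_integrand_abs_le[of "Suc k" c d] cd by auto
  have int_1: "integrable Xi (gamma_integrand k 1)"
  proof (cases "k = 0")
    case False
    then obtain B' where "\<And>t u. t \<in> {c..d} \<Longrightarrow> u \<in> Delta \<Longrightarrow> \<bar>gamma_integrand k t u\<bar> \<le> B'"
      using gamma_integrand_abs_le[of k c d] cd by auto
    then show ?thesis
      using cd by (intro integrable_gamma_integrand_of_bound[of _ _ B']) auto
  qed (simp add: gamma_integrand_0_at_1)
  have der: "((\<lambda>s. gamma_integrand k s u) has_real_derivative gamma_integrand (Suc k) t u) (at t)"
    if "c < t" "u \<in> space Xi" for t u
    using has_real_derivative_gamma_integrand[of u t k] that cd space_Xi by auto
  have bnd: "\<bar>gamma_integrand (Suc k) t u\<bar> \<le> B" if "c < t" "t < d" "u \<in> space Xi" for t u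
    using B that space_Xi by auto
  have g: "integrable Xi (\<lambda>u. B)"
    by (rule finite_measure.integrable_const[OF finite])
  show "integrable Xi (gamma_integrand k x)"
    by (rule integrable_of_derivative_bound[where f'="gamma_integrand (Suc k)" and c=c and d=d and p=1,
          OF _ _ int_1 borel_measurable_gamma_integrand der bnd g]) (use cd in auto)
  show "((\<lambda>t. integral\<^sup>L Xi (gamma_integrand k t)) has_real_derivative
      integral\<^sup>L Xi (gamma_integrand (Suc k) x)) (at x)"
    by (rule has_real_derivative_integral[where c=c and d=d and p=1,
          OF _ _ int_1 borel_measurable_gamma_integrand borel_measurable_gamma_integrand der bnd g])
       (use cd in auto)
qed

definition gamma_derivative :: "nat \<Rightarrow> real \<Rightarrow> real" where
  "gamma_derivative k x = xi_a Xi * gamma_poly k x + integral\<^sup>L Xi (gamma_integrand k x)"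

lemma xi_gamma_eq_integral:
  "0 < x \<Longrightarrow> xi_gamma Xi x = xi_a Xi * (x * (x - 1) / 2) + integral\<^sup>L Xi (gamma_integrand 0 x)"
proof -
  assume "0 < x"
  then have "(\<lambda>u. \<Sum>i. rpow (1 - u i) x - 1 + x * u i) = (\<lambda>u. \<Sum>i. gamma_kernel 0 (u i) x)"
    by (simp add: rpow_def gamma_kernel_def mult.commute)
  then show ?thesis
    by (simp add: xi_gamma_def nu_integral_gamma_kernel)
qed

lemma has_real_derivative_gamma_derivative:
  "0 < x \<Longrightarrow> (gamma_derivative k has_real_derivative gamma_derivative (Suc k) x) (at x)"
  unfolding gamma_derivative_def[abs_def]
  by (intro DERIV_add DERIV_cmult has_real_derivative_gamma_poly has_real_derivative_integral_gamma_integrand(2))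

lemma higher_deriv_xi_gamma: "0 < x \<Longrightarrow> (deriv ^^ k) (xi_gamma Xi) x = gamma_derivative k x"
proof (induction k arbitrary: x)
  case 0
  then show ?case
    by (simp add: xi_gamma_eq_integral gamma_derivative_def gamma_poly_def)
next
  case (Suc k)
  have "((deriv ^^ k) (xi_gamma Xi) has_real_derivative gamma_derivative (Suc k) x) (at x)"
    using has_real_derivative_gamma_derivative[OF Suc.prems]
    by (rule has_field_derivative_transform_within_open[of _ _ _ "{0<..}"]) (use Suc in auto)
  then show ?case
    by (simp add: DERIV_imp_deriv)
qed

lemma has_real_derivative_higher_deriv_xi_gamma:
  assumes "0 < x"
  shows "((deriv ^^ k) (xi_gamma Xi) has_real_derivative (deriv ^^ Suc k) (xi_gamma Xi) x) (at x)"
proof -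
  have "((deriv ^^ k) (xi_gamma Xi) has_real_derivative gamma_derivative (Suc k) x) (at x)"
    using has_real_derivative_gamma_derivative[OF assms]
    by (rule has_field_derivative_transform_within_open[of _ _ _ "{0<..}"])
       (use assms higher_deriv_xi_gamma in auto)
  then show ?thesis
    using higher_deriv_xi_gamma[OF assms, of "Suc k"] by simp
qed

lemma xi_a_pos_or_emeasure_nonzero:
  assumes "emeasure Xi Delta \<noteq> 0"
  shows "0 < xi_a Xi \<or> emeasure Xi (Delta - {\<lambda>_. 0}) \<noteq> 0"
proof (rule ccontr)
  assume "\<not> ?thesis"
  then have "emeasure Xi {\<lambda>_. 0} = 0" "emeasure Xi (Delta - {\<lambda>_. 0}) = 0"
    using finite_measure.emeasure_eq_measure[OF finite, of "{\<lambda>_. 0}"] measure_nonneg[of Xi "{\<lambda>_. 0}"]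
    by (auto simp: xi_a_def)
  moreover have "Delta = (Delta - {\<lambda>_. 0}) \<union> {\<lambda>_. 0}"
    using zero_in_Delta by blast
  ultimately have "emeasure Xi Delta = 0"
    using plus_emeasure[OF Delta_minus_zero_in_sets zero_in_sets] by auto
  with assms show False ..
qed

lemma xi_gamma_div_strict_mono:
  assumes ne: "emeasure Xi Delta \<noteq> 0" and xy: "0 < x" "x < y"
  shows "xi_gamma Xi x / x < xi_gamma Xi y / y"
proof -
  have y: "0 < y"
    using xy by linarith
  define D where "D u = gamma_integrand 0 y u / y - gamma_integrand 0 x u / x" for u
  have int_x: "integrable Xi (gamma_integrand 0 x)" and int_y: "integrable Xi (gamma_integrand 0 y)"
    using has_real_derivative_integral_gamma_integrand(1) xy y by auto
  then have int_D: "integrable Xi D"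
    unfolding D_def[abs_def] by auto
  have "xi_gamma Xi y / y - xi_gamma Xi x / x = xi_a Xi * (y - x) / 2 + integral\<^sup>L Xi D"
    using int_x int_y xy y unfolding D_def[abs_def]
    by (simp add: xi_gamma_eq_integral integral_divide_zero field_simps)
  moreover have "0 < xi_a Xi * (y - x) / 2 + integral\<^sup>L Xi D"
  proof -
    have D_nonneg: "0 \<le> D u" if "u \<in> space Xi" for u
      using gamma_integrand_0_div_mono(1)[of u x y] that xy space_Xi by (simp add: D_def)
    have D_pos: "0 < D u" if "u \<in> Delta - {\<lambda>_. 0}" for u
      using gamma_integrand_0_div_mono(2)[of u x y] that xy by (simp add: D_def)
    have a: "0 \<le> xi_a Xi * (y - x) / 2"
      using xy by (simp add: xi_a_def)
    have "0 \<le> integral\<^sup>L Xi D"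
      using D_nonneg by (intro integral_nonneg_AE) auto
    consider "0 < xi_a Xi" | "emeasure Xi (Delta - {\<lambda>_. 0}) \<noteq> 0"
      using xi_a_pos_or_emeasure_nonzero[OF ne] by blast
    then show ?thesis
    proof cases
      case 1
      then have "0 < xi_a Xi * (y - x) / 2"
        using xy by simp
      with \<open>0 \<le> integral\<^sup>L Xi D\<close> show ?thesis
        by linarith
    next
      case 2
      have "0 < integral\<^sup>L Xi D"
        using integral_pos_of_pos_on[OF int_D D_nonneg D_pos Delta_minus_zero_in_sets 2] .
      with a show ?thesis
        by linarith
    qed
  qed
  ultimately show ?thesis
    by linarith
qed

lemma xi_gamma_at_1: "xi_gamma Xi 1 = 0"
  using xi_gamma_eq_integral[of 1] by (simp add: gamma_integrand_0_at_1)

lemma xi_gamma_pos: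
  assumes "emeasure Xi Delta \<noteq> 0" "1 < x"
  shows "0 < xi_gamma Xi x"
  using xi_gamma_div_strict_mono[OF assms(1), of 1 x] assms(2) by (simp add: xi_gamma_at_1 zero_less_divide_iff)

lemma xi_gamma_strict_mono_on:
  assumes ne: "emeasure Xi Delta \<noteq> 0"
  shows "strict_mono_on {1..} (xi_gamma Xi)"
proof (rule strict_mono_onI)
  fix r s :: real
  assume rs: "r \<in> {1..}" "s \<in> {1..}" "r < s"
  have "0 \<le> xi_gamma Xi r / r"
    using rs xi_gamma_at_1 xi_gamma_pos[OF ne, of r] by (cases "r = 1") auto
  then have "xi_gamma Xi r \<le> s * (xi_gamma Xi r / r)"
    using rs mult_right_mono[of r s "xi_gamma Xi r / r"] by simp
  also have "\<dots> < s * (xi_gamma Xi s / s)"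
    using xi_gamma_div_strict_mono[OF ne, of r s] rs by (intro mult_strict_left_mono) auto
  finally show "xi_gamma Xi r < xi_gamma Xi s"
    using rs by simp
qed

lemma xi_gamma_le:
  assumes x: "2 \<le> x"
  shows "xi_gamma Xi x \<le> x * (x - 1) * (xi_a Xi / 2 + measure Xi (Delta - {\<lambda>_. 0}))"
proof -
  let ?S = "Delta - {\<lambda>_. 0}"
  have "integral\<^sup>L Xi (gamma_integrand 0 x) \<le> (\<integral>u. x * (x - 1) * indicator ?S u \<partial>Xi)"
  proof (rule integral_mono)
    show "integrable Xi (gamma_integrand 0 x)"
      using has_real_derivative_integral_gamma_integrand(1) x by simp
    show "integrable Xi (\<lambda>u. x * (x - 1) * indicator ?S u)"
      using integrable_real_indicator[OF Delta_minus_zero_in_sets] finite_measure.emeasure_finite[OF finite]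
      by (simp add: top.not_eq_extremum)
    show "gamma_integrand 0 x u \<le> x * (x - 1) * indicator ?S u" if "u \<in> space Xi" for u
      using gamma_integrand_0_le[OF _ x] that space_Xi by simp
  qed
  also have "\<dots> = x * (x - 1) * measure Xi ?S"
    using Delta_minus_zero_in_sets by simp
  finally show ?thesis
    using x by (simp add: xi_gamma_eq_integral algebra_simps)
qed

end

theorem mainTheorem1:
  fixes Xi :: "(nat \<Rightarrow> real) measure"
  assumes "finite_measure Xi"
    and "sets Xi = sets (restrict_space borel Delta)"
    and "emeasure Xi Delta \<noteq> 0"
  shows "xi_gamma Xi 0 = 0 \<and> xi_gamma Xi 1 = 0
    \<and> (\<forall>x>1. xi_gamma Xi x > 0)
    \<and> (\<forall>x\<ge>2. xi_gamma Xi x \<le> x * (x - 1) * (xi_a Xi / 2 + measure Xi (Delta - {\<lambda>_. 0})))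
    \<and> (\<forall>k. \<forall>x>0. ((deriv ^^ k) (xi_gamma Xi) has_real_derivative (deriv ^^ Suc k) (xi_gamma Xi) x) (at x))
    \<and> (\<forall>x>0. deriv (xi_gamma Xi) x = xi_a Xi * (x - 1/2)
          + nu_integral Xi (\<lambda>u. \<Sum>i. ((1 - u i) powr x * ln (1 - u i) + u i)))
    \<and> (\<forall>k\<ge>2. \<forall>x>0. (deriv ^^ k) (xi_gamma Xi) x = xi_a Xi * (if k = 2 then 1 else 0)
          + nu_integral Xi (\<lambda>u. \<Sum>i. (1 - u i) powr x * (ln (1 - u i)) ^ k))
    \<and> strict_mono_on {1..} (\<lambda>x. xi_gamma Xi x / x)
    \<and> strict_mono_on {1..} (xi_gamma Xi)"
proof -
  note Xi = assms(1,2)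
  have derivs: "(deriv ^^ k) (xi_gamma Xi) x
      = xi_a Xi * gamma_poly k x + nu_integral Xi (\<lambda>u. \<Sum>i. gamma_kernel k (u i) x)" if "0 < x" for k x
    using higher_deriv_xi_gamma[OF Xi that] by (simp add: gamma_derivative_def[OF Xi] nu_integral_gamma_kernel)
  have "deriv (xi_gamma Xi) x = xi_a Xi * (x - 1/2)
      + nu_integral Xi (\<lambda>u. \<Sum>i. ((1 - u i) powr x * ln (1 - u i) + u i))" if "0 < x" for x
    using derivs[OF that, of 1] by (simp add: gamma_poly_def gamma_kernel_def)
  moreover have "(deriv ^^ k) (xi_gamma Xi) x = xi_a Xi * (if k = 2 then 1 else 0)
      + nu_integral Xi (\<lambda>u. \<Sum>i. (1 - u i) powr x * (ln (1 - u i)) ^ k)" if "2 \<le> k" "0 < x" for k x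
    using derivs[OF that(2), of k] that(1) by (simp add: gamma_poly_def gamma_kernel_def)
  moreover have "xi_gamma Xi 0 = 0"
    by (simp add: xi_gamma_def rpow_def nu_integral_def)
  ultimately show ?thesis
    using xi_gamma_at_1[OF Xi] xi_gamma_pos[OF Xi assms(3)] xi_gamma_le[OF Xi]
      has_real_derivative_higher_deriv_xi_gamma[OF Xi] xi_gamma_div_strict_mono[OF Xi assms(3)]
      xi_gamma_strict_mono_on[OF Xi assms(3)]
    by (auto intro: strict_mono_onI)
qed

end
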